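(* Let $n \geq 1$, let $Q, R$ be fixed real symmetric positive semidefinite $n \times n$ matrices and $S = \begin{pmatrix} Q & 0 \\ 0 & R \end{pmatrix}$. Let $U, V$ be independent Haar-distributed random $n\times n$ orthogonal matrices with $j$-th columns $u_j, v_j$, and let $\mu = \min_{j \leq n} \left( u_j^\top Q u_j + v_j^\top R v_j \right)$. Let $N_1,\dots,N_n, M_1, \dots, M_n$ be i.i.d. $\chi^2_n$ random variables independent of $(U,V)$, and set $a_j = \begin{pmatrix} \sqrt{N_j}\, u_j \\ \sqrt{M_j}\, v_j \end{pmatrix} \in \mathbb{R}^{2n}$. Then $$\frac{1}{n}\,\mathbb{E}\left[ \min_{j \leq n} a_j^\top S a_j \right] \leq \mathbb{E}\mu \leq \frac{\operatorname{tr}(S)}{n}.$$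
   Context: $\chi^2_n$ is the chi-squared distribution with $n$ degrees of freedom. *)

theory Defs
  imports "HOL-Probability.Probability"
begin

definition chi2_density :: "nat \<Rightarrow> real \<Rightarrow> real" where
  "chi2_density k x =
     (if 0 < x then x powr (real k / 2 - 1) * exp (- x / 2)
                    / (2 powr (real k / 2) * Gamma (real k / 2))
      else 0)"

definition chi2_measure :: "nat \<Rightarrow> real measure" where
  "chi2_measure k = density lborel (\<lambda>x. ennreal (chi2_density k x))"

definition haar_orthogonal :: "(real^'n^'n) measure \<Rightarrow> bool" where
  "haar_orthogonal H \<longleftrightarrow>
     prob_space H \<and> sets H = sets (borel :: (real^'n^'n) measure) \<and>
     emeasure H {X. orthogonal_matrix X} = 1 \<and>
     (\<forall>G. orthogonal_matrix G \<longrightarrow> distr H borel (\<lambda>X. G ** X) = H)"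

definition psd_symmetric :: "real^'n^'n \<Rightarrow> bool" where
  "psd_symmetric A \<longleftrightarrow> transpose A = A \<and> (\<forall>x. 0 \<le> x \<bullet> (A *v x))"

text \<open>Block diagonal matrix diag(Q, R), indexed by the disjoint sum 'n + 'n
  (a model of {1..2n}).\<close>
definition block_diag :: "real^'n^'n \<Rightarrow> real^'n^'n \<Rightarrow> real^('n + 'n)^('n + 'n)" where
  "block_diag Q R = (\<chi> i j. case (i, j) of
       (Inl a, Inl b) \<Rightarrow> Q $ a $ b
     | (Inr a, Inr b) \<Rightarrow> R $ a $ b
     | _ \<Rightarrow> 0)"

definition stack :: "real^'n \<Rightarrow> real^'n \<Rightarrow> real^('n + 'n)" where
  "stack x y = (\<chi> i. case i of Inl a \<Rightarrow> x $ a | Inr a \<Rightarrow> y $ a)"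

end

theory Submission
  imports Defs
begin

(* Fix U and V and let k be an index at which mu is attained. Then
   min_j a_j' S a_j <= N_k u_k' Q u_k + M_k v_k' R v_k, and integrating out the
   chi-squared variables, which are independent of (U, V) and have mean n, gives the
   first inequality. The second holds pointwise: n mu <= sum_j (u_j' Q u_j + v_j' R v_j)
   = tr (U' Q U) + tr (V' R V) = tr Q + tr R for orthogonal U and V. *)

definition gamma_kernel :: "real \<Rightarrow> real \<Rightarrow> real" where
  "gamma_kernel a t = (if 0 < t then t powr (a - 1) * exp (- t / 2) else 0)"

lemma gamma_kernel_borel [measurable]: "gamma_kernel a \<in> borel_measurable borel"
  unfolding gamma_kernel_def by measurable

lemma gamma_kernel_nonneg: "0 \<le> gamma_kernel a t"
  by (simp add: gamma_kernel_def)

lemma nn_integral_gamma_kernel: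
  assumes "0 < a"
  shows "(\<integral>\<^sup>+t. gamma_kernel a t \<partial>lborel) = ennreal (2 powr a * Gamma a)"
proof -
  have "(\<integral>\<^sup>+t. gamma_kernel a t \<partial>lborel) = 2 * (\<integral>\<^sup>+t. gamma_kernel a (2 * t) \<partial>lborel)"
    using nn_integral_real_affine[of "\<lambda>t. ennreal (gamma_kernel a t)" 2 0] by simp
  also have "\<dots> = 2 * (\<integral>\<^sup>+t. ennreal (2 powr (a - 1)) *
      (indicator {0..} t * (t powr (a - 1) / exp t)) \<partial>lborel)"
    by (intro arg_cong2[where f = "(*)"] nn_integral_cong)
       (auto simp: gamma_kernel_def indicator_def powr_mult exp_minus field_simps simp flip: ennreal_mult')
  also have "\<dots> = ennreal (2 * 2 powr (a - 1) * Gamma a)"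
    using nn_integral_has_integral_lebesgue[OF _ Gamma_integral_real[OF assms]] assms
    by (simp add: nn_integral_cmult ennreal_mult Gamma_real_pos mult.assoc)
  also have "2 * 2 powr (a - 1) = 2 powr a"
    by (simp add: powr_diff)
  finally show ?thesis .
qed

lemma abs_mult_gamma_kernel: "\<bar>t\<bar> * gamma_kernel a t = gamma_kernel (a + 1) t"
  by (simp add: gamma_kernel_def powr_mult_base)

lemma chi2_density_eq_gamma_kernel:
  "chi2_density k x = gamma_kernel (real k / 2) x / (2 powr (real k / 2) * Gamma (real k / 2))"
  by (simp add: chi2_density_def gamma_kernel_def)

lemma nn_integral_chi2_measure:
  assumes "0 < k" and [measurable]: "f \<in> borel_measurable borel"
  shows "(\<integral>\<^sup>+x. f x \<partial>chi2_measure k) =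
    (\<integral>\<^sup>+x. f x * gamma_kernel (real k / 2) x \<partial>lborel) / ennreal (2 powr (real k / 2) * Gamma (real k / 2))"
proof -
  have "0 < 2 powr (real k / 2) * Gamma (real k / 2)"
    using assms by (simp add: Gamma_real_pos)
  then show ?thesis
    unfolding chi2_measure_def
    by (simp add: nn_integral_density chi2_density_eq_gamma_kernel gamma_kernel_nonneg
          ac_simps flip: divide_ennreal nn_integral_divide ennreal_times_divide)
qed

lemma prob_space_chi2_measure:
  assumes "0 < k"
  shows "prob_space (chi2_measure k)"
proof
  have "Gamma (real k / 2) \<noteq> 0"
    using assms Gamma_real_pos[of "real k / 2"] by fastforce
  then show "emeasure (chi2_measure k) (space (chi2_measure k)) = 1"
    using nn_integral_chi2_measure[OF assms, of "\<lambda>_. 1"] assms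
    by (simp add: nn_integral_gamma_kernel divide_ennreal)
qed

lemma nn_integral_abs_chi2_measure:
  assumes "0 < k"
  shows "(\<integral>\<^sup>+x. \<bar>x\<bar> \<partial>chi2_measure k) = real k"
proof -
  let ?a = "real k / 2"
  have "Gamma (?a + 1) = ?a * Gamma ?a"
    using assms by (intro Gamma_plus1) (auto elim!: nonpos_Ints_cases)
  moreover have "0 < Gamma ?a"
    using assms by (simp add: Gamma_real_pos)
  ultimately have "2 powr (?a + 1) * Gamma (?a + 1) / (2 powr ?a * Gamma ?a) = real k"
    by (simp add: powr_add) (simp add: field_simps)
  then show ?thesis
    using nn_integral_chi2_measure[OF assms, of "\<lambda>x. \<bar>x\<bar>"] assms
    by (simp add: ennreal_mult' abs_mult_gamma_kernel nn_integral_gamma_kernel divide_ennreal Gamma_real_pos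
        flip: ennreal_mult')
qed

lemma sets_chi2_measure [measurable_cong]: "sets (chi2_measure k) = sets borel"
  by (simp add: chi2_measure_def)

lemma sets_PiM_chi2_measure [measurable_cong]:
  "sets (\<Pi>\<^sub>M j\<in>I. chi2_measure k) = sets (\<Pi>\<^sub>M j\<in>I. borel)"
  by (intro sets_PiM_cong) (simp_all add: sets_chi2_measure)

lemma nn_integral_abs_component_chi2:
  assumes "0 < k" and "i \<in> I"
  shows "(\<integral>\<^sup>+N. \<bar>N i\<bar> \<partial>(\<Pi>\<^sub>M j\<in>I. chi2_measure k)) = real k"
proof -
  have "distr (\<Pi>\<^sub>M j\<in>I. chi2_measure k) (chi2_measure k) (\<lambda>N. N i) = chi2_measure k"
    using assms by (intro distr_PiM_component prob_space_chi2_measure)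
  then show ?thesis
    using nn_integral_distr[of "\<lambda>N. N i" "\<Pi>\<^sub>M j\<in>I. chi2_measure k" "chi2_measure k" "\<lambda>x. \<bar>x\<bar>"] assms
    by (simp add: nn_integral_abs_chi2_measure)
qed

lemma (in pair_prob_space) nn_integral_fst_pair:
  "f \<in> borel_measurable M1 \<Longrightarrow> (\<integral>\<^sup>+z. f (fst z) \<partial>(M1 \<Otimes>\<^sub>M M2)) = (\<integral>\<^sup>+x. f x \<partial>M1)"
  by (simp add: M2.nn_integral_fst[symmetric] M2.emeasure_space_1)

lemma (in pair_prob_space) nn_integral_snd_pair:
  "f \<in> borel_measurable M2 \<Longrightarrow> (\<integral>\<^sup>+z. f (snd z) \<partial>(M1 \<Otimes>\<^sub>M M2)) = (\<integral>\<^sup>+y. f y \<partial>M2)"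
  by (simp add: nn_integral_snd[symmetric] M1.emeasure_space_1)

(* If f is not measurable, distr M N f is the null measure. *)
lemma measurable_if_prob_space_distr:
  assumes P: "prob_space (distr M N f)" and f: "f \<in> space M \<rightarrow> space N"
  shows "f \<in> measurable M N"
proof (rule measurableI)
  show "x \<in> space M \<Longrightarrow> f x \<in> space N" for x
    using f by auto
  fix A assume A: "A \<in> sets N"
  let ?\<mu> = "\<lambda>A. emeasure M (f -` A \<inter> space M)"
  have distr_eq: "emeasure (distr M N f) =
      (\<lambda>B. if B \<in> sets N \<and> measure_space (space N) (sets N) ?\<mu> then ?\<mu> B else 0)"
    unfolding distr_def emeasure_measure_of_conv sets.sigma_sets_eq ..
  have space_1: "emeasure (distr M N f) (space N) = 1"
    using prob_space.emeasure_space_1[OF P] by simp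
  then have "measure_space (space N) (sets N) ?\<mu>"
    using distr_eq by (auto split: if_splits)
  moreover have "emeasure (distr M N f) A + emeasure (distr M N f) (space N - A) = 1"
    using A space_1 plus_emeasure[of A "distr M N f" "space N - A"] sets.sets_into_space[OF A]
    by (simp add: Un_Diff_cancel Un_absorb1)
  ultimately have sum_1: "?\<mu> A + ?\<mu> (space N - A) = 1"
    using distr_eq A by auto
  have compl: "f -` (space N - A) \<inter> space M = space M - (f -` A \<inter> space M)"
    using f by auto
  show "f -` A \<inter> space M \<in> sets M"
  proof (rule ccontr)
    assume "f -` A \<inter> space M \<notin> sets M"
    moreover from this have "f -` (space N - A) \<inter> space M \<notin> sets M"
      unfolding compl by (metis Diff_Diff_Int Int_absorb1 inf_le2 sets.Diff sets.top)
    ultimately show False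
      using sum_1 by (simp add: emeasure_notin_sets)
  qed
qed

lemma integral_distr_prob_space:
  fixes g :: "'b \<Rightarrow> 'c::{banach, second_countable_topology}"
  assumes "prob_space (distr M N f)" and "f \<in> space M \<rightarrow> space N"
    and "g \<in> borel_measurable N"
  shows "(\<integral>x. g (f x) \<partial>M) = (\<integral>y. g y \<partial>distr M N f)"
  using integral_distr[OF measurable_if_prob_space_distr[OF assms(1,2)] assms(3)] by simp

lemma sum_UNIV_Plus:
  "(\<Sum>i\<in>UNIV. g i) = (\<Sum>i\<in>UNIV. g (Inl i)) + (\<Sum>i\<in>UNIV. g (Inr i))"
  for g :: "'a::finite + 'b::finite \<Rightarrow> 'c::comm_monoid_add"
  by (simp add: sum.Plus flip: UNIV_Plus_UNIV)

lemma stack_inner_block_diag: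
  "stack a b \<bullet> (block_diag Q R *v stack a b) = a \<bullet> (Q *v a) + b \<bullet> (R *v b)"
  by (simp add: stack_def block_diag_def inner_vec_def matrix_vector_mult_def sum_UNIV_Plus)

lemma trace_block_diag: "trace (block_diag Q R) = trace Q + trace R"
  by (simp add: trace_def block_diag_def sum_UNIV_Plus)

lemma sum_column_forms_eq_trace:
  fixes U Q :: "real^'n^'n"
  shows "(\<Sum>j\<in>UNIV. column j U \<bullet> (Q *v column j U)) = trace (transpose U ** Q ** U)"
  unfolding trace_def column_def inner_vec_def matrix_vector_mult_def matrix_matrix_mult_def transpose_def
  by (simp add: sum_distrib_left sum_distrib_right mult_ac) (rule sum.cong[OF refl], subst sum.swap, simp add: mult_ac)

lemma sum_column_forms_orthogonal_matrix:
  fixes U Q :: "real^'n^'n"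
  assumes "orthogonal_matrix U"
  shows "(\<Sum>j\<in>UNIV. column j U \<bullet> (Q *v column j U)) = trace Q"
proof -
  have "trace (transpose U ** Q ** U) = trace (Q ** (U ** transpose U))"
    by (metis trace_mul_sym matrix_mul_assoc)
  then show ?thesis
    using assms by (simp add: sum_column_forms_eq_trace orthogonal_matrix_def)
qed

definition column_form :: "real^'n^'n \<Rightarrow> real^'n^'n \<Rightarrow> 'n \<Rightarrow> real" where
  "column_form Q U j = column j U \<bullet> (Q *v column j U)"

definition min_form :: "real^'n^'n \<Rightarrow> real^'n^'n \<Rightarrow> (real^'n^'n) \<times> (real^'n^'n) \<Rightarrow> real" where
  "min_form Q R UV = Min (range (\<lambda>j. column_form Q (fst UV) j + column_form R (snd UV) j))"

(* The absolute values come from sqrt being odd in Isabelle: sqrt x * sqrt x = |x|. *)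
definition scaled_min_form ::
    "real^'n^'n \<Rightarrow> real^'n^'n \<Rightarrow> (real^'n^'n) \<times> (real^'n^'n) \<Rightarrow> ('n \<Rightarrow> real) \<times> ('n \<Rightarrow> real) \<Rightarrow> real"
  where "scaled_min_form Q R UV NM =
    Min (range (\<lambda>j. \<bar>fst NM j\<bar> * column_form Q (fst UV) j + \<bar>snd NM j\<bar> * column_form R (snd UV) j))"

lemma column_form_borel [measurable]: "(\<lambda>U. column_form Q U j) \<in> borel_measurable borel"
proof (rule borel_measurable_continuous_onI)
  show "continuous_on UNIV (\<lambda>U. column_form Q U j)"
    unfolding column_form_def column_def inner_vec_def matrix_vector_mult_def
    by (intro continuous_intros)
qed

lemma min_form_borel [measurable]: "min_form Q R \<in> borel_measurable (borel \<Otimes>\<^sub>M borel)"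
  unfolding min_form_def by measurable

lemma scaled_min_form_borel [measurable]:
  "case_prod (scaled_min_form Q R) \<in>
     borel_measurable ((borel \<Otimes>\<^sub>M borel) \<Otimes>\<^sub>M ((\<Pi>\<^sub>M j\<in>UNIV. borel) \<Otimes>\<^sub>M (\<Pi>\<^sub>M j\<in>UNIV. borel)))"
  unfolding scaled_min_form_def case_prod_beta by measurable

lemma column_form_nonneg: "psd_symmetric Q \<Longrightarrow> 0 \<le> column_form Q U j"
  by (simp add: psd_symmetric_def column_form_def)

lemma min_form_nonneg: "psd_symmetric Q \<Longrightarrow> psd_symmetric R \<Longrightarrow> 0 \<le> min_form Q R UV"
  by (simp add: min_form_def column_form_nonneg)

lemma scaled_min_form_nonneg:
  "psd_symmetric Q \<Longrightarrow> psd_symmetric R \<Longrightarrow> 0 \<le> scaled_min_form Q R UV NM"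
  by (simp add: scaled_min_form_def column_form_nonneg)

lemma Min_stack_form_eq_scaled_min_form:
  "Min (range (\<lambda>j. let a = stack (sqrt (N j) *\<^sub>R column j U) (sqrt (M j) *\<^sub>R column j V)
                    in a \<bullet> (block_diag Q R *v a)))
   = scaled_min_form Q R (U, V) (N, M)"
  by (simp add: scaled_min_form_def column_form_def stack_inner_block_diag matrix_vector_mult_scaleR
      real_sqrt_mult[symmetric] mult.assoc[symmetric])

lemma Min_column_forms_eq_min_form:
  "Min (range (\<lambda>j. column j U \<bullet> (Q *v column j U) + column j V \<bullet> (R *v column j V)))
   = min_form Q R (U, V)"
  by (simp add: min_form_def column_form_def)

lemma min_form_le_trace:
  fixes Q R U V :: "real^'n^'n"
  assumes "orthogonal_matrix U" and "orthogonal_matrix V"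
  shows "min_form Q R (U, V) \<le> trace (block_diag Q R) / real CARD('n)"
proof -
  have "real CARD('n) * min_form Q R (U, V) = (\<Sum>j\<in>(UNIV :: 'n set). min_form Q R (U, V))"
    by simp
  also have "\<dots> \<le> (\<Sum>j\<in>UNIV. column_form Q U j + column_form R V j)"
    unfolding min_form_def by (intro sum_mono) simp
  also have "\<dots> = trace (block_diag Q R)"
    using assms by (simp add: sum.distrib column_form_def sum_column_forms_orthogonal_matrix trace_block_diag)
  finally show ?thesis
    by (simp add: field_simps)
qed

lemma nn_integral_scaled_min_form_le:
  fixes Q R :: "real^'n^'n"
  assumes Q: "psd_symmetric Q" and R: "psd_symmetric R"
  defines "C \<equiv> \<Pi>\<^sub>M j\<in>UNIV. chi2_measure CARD('n)"
  shows "(\<integral>\<^sup>+NM. scaled_min_form Q R UV NM \<partial>(C \<Otimes>\<^sub>M C)) \<le> real CARD('n) * min_form Q R UV"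
proof -
  interpret C: prob_space C
    unfolding C_def by (intro prob_space_PiM prob_space_chi2_measure) simp
  interpret pair_prob_space C C ..
  have [measurable_cong]: "sets C = sets (\<Pi>\<^sub>M j\<in>UNIV. borel)"
    unfolding C_def by (rule sets_PiM_chi2_measure)
  have component: "(\<integral>\<^sup>+N. \<bar>N k\<bar> \<partial>C) = real CARD('n)" for k
    unfolding C_def by (rule nn_integral_abs_component_chi2) simp_all
  obtain k where "min_form Q R UV = column_form Q (fst UV) k + column_form R (snd UV) k"
  proof -
    have "min_form Q R UV \<in> range (\<lambda>j. column_form Q (fst UV) j + column_form R (snd UV) j)"
      unfolding min_form_def by (rule Min_in) simp_all
    then show ?thesis
      using that by blast
  qed
  moreover define x y where "x = column_form Q (fst UV) k" and "y = column_form R (snd UV) k"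
  ultimately have min_eq: "min_form Q R UV = x + y"
    by simp
  have "x \<ge> 0" "y \<ge> 0"
    unfolding x_def y_def using Q R by (simp_all add: column_form_nonneg)
  have "(\<integral>\<^sup>+NM. scaled_min_form Q R UV NM \<partial>(C \<Otimes>\<^sub>M C))
      \<le> (\<integral>\<^sup>+NM. x * ennreal \<bar>fst NM k\<bar> + y * ennreal \<bar>snd NM k\<bar> \<partial>(C \<Otimes>\<^sub>M C))"
  proof (rule nn_integral_mono)
    fix NM :: "('n \<Rightarrow> real) \<times> ('n \<Rightarrow> real)"
    have "scaled_min_form Q R UV NM \<le> x * \<bar>fst NM k\<bar> + y * \<bar>snd NM k\<bar>"
      unfolding scaled_min_form_def x_def y_def by (rule Min_le) (auto simp: mult.commute)
    then show "ennreal (scaled_min_form Q R UV NM) \<le> x * ennreal \<bar>fst NM k\<bar> + y * ennreal \<bar>snd NM k\<bar>"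
      using \<open>x \<ge> 0\<close> \<open>y \<ge> 0\<close> by (simp add: ennreal_leI flip: ennreal_mult ennreal_plus)
  qed
  also have "\<dots> = x * (\<integral>\<^sup>+N. \<bar>N k\<bar> \<partial>C) + y * (\<integral>\<^sup>+M. \<bar>M k\<bar> \<partial>C)"
    using nn_integral_fst_pair[of "\<lambda>N. \<bar>N k\<bar>"] nn_integral_snd_pair[of "\<lambda>N. \<bar>N k\<bar>"]
    by (subst nn_integral_add) (simp_all add: nn_integral_cmult)
  also have "\<dots> = real CARD('n) * min_form Q R UV"
    using \<open>x \<ge> 0\<close> \<open>y \<ge> 0\<close>
    by (simp add: component min_eq distrib_right mult.commute flip: ennreal_mult ennreal_plus)
  finally show ?thesis .
qed

lemma AE_orthogonal_matrix_if_haar_orthogonal: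
  assumes "haar_orthogonal H"
  shows "AE X in H. orthogonal_matrix X"
proof -
  have H: "prob_space H" "sets H = sets borel" and orth_1: "emeasure H {X. orthogonal_matrix X} = 1"
    using assms unfolding haar_orthogonal_def by simp_all
  have "{X. orthogonal_matrix X} \<in> sets H"
    using orth_1 emeasure_notin_sets by fastforce
  moreover have "space H = UNIV"
    using sets_eq_imp_space_eq[OF H(2)] by simp
  ultimately show ?thesis
    using prob_space.AE_I_eq_1[OF H(1), of orthogonal_matrix] orth_1 by simp
qed

lemma nn_integral_min_form_le_trace:
  fixes Q R :: "real^'n^'n" and H :: "(real^'n^'n) measure"
  assumes "prob_space H" and [measurable_cong]: "sets H = sets borel"
    and orth: "AE U in H. orthogonal_matrix U"
  shows "(\<integral>\<^sup>+UV. min_form Q R UV \<partial>(H \<Otimes>\<^sub>M H)) \<le> trace (block_diag Q R) / real CARD('n)"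
proof -
  interpret H: prob_space H by fact
  let ?c = "ennreal (trace (block_diag Q R) / real CARD('n))"
  have "(\<integral>\<^sup>+UV. min_form Q R UV \<partial>(H \<Otimes>\<^sub>M H)) = (\<integral>\<^sup>+U. \<integral>\<^sup>+V. min_form Q R (U, V) \<partial>H \<partial>H)"
    by (rule H.nn_integral_fst[symmetric]) measurable
  also have "\<dots> \<le> (\<integral>\<^sup>+U. \<integral>\<^sup>+V. ?c \<partial>H \<partial>H)"
    using orth
  proof (intro nn_integral_mono_AE, eventually_elim)
    case (elim U)
    show ?case
      using orth by (intro nn_integral_mono_AE, eventually_elim) (simp add: elim min_form_le_trace ennreal_leI)
  qed
  also have "\<dots> = ?c"
    by (simp add: H.emeasure_space_1)
  finally show ?thesis .
qed

lemma nn_integral_scaled_min_form_pair_le: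
  fixes Q R :: "real^'n^'n" and H :: "(real^'n^'n) measure"
  assumes [measurable_cong]: "sets H = sets borel"
    and Q: "psd_symmetric Q" and R: "psd_symmetric R"
  defines "C \<equiv> \<Pi>\<^sub>M j\<in>UNIV. chi2_measure CARD('n)"
  shows "(\<integral>\<^sup>+z. case_prod (scaled_min_form Q R) z \<partial>((H \<Otimes>\<^sub>M H) \<Otimes>\<^sub>M (C \<Otimes>\<^sub>M C)))
    \<le> real CARD('n) * (\<integral>\<^sup>+UV. min_form Q R UV \<partial>(H \<Otimes>\<^sub>M H))"
proof -
  interpret C: prob_space C
    unfolding C_def by (intro prob_space_PiM prob_space_chi2_measure) simp
  interpret CC: pair_prob_space C C ..
  have [measurable_cong]: "sets C = sets (\<Pi>\<^sub>M j\<in>UNIV. borel)"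
    unfolding C_def by (rule sets_PiM_chi2_measure)
  have "(\<integral>\<^sup>+z. case_prod (scaled_min_form Q R) z \<partial>((H \<Otimes>\<^sub>M H) \<Otimes>\<^sub>M (C \<Otimes>\<^sub>M C)))
      = (\<integral>\<^sup>+UV. \<integral>\<^sup>+NM. scaled_min_form Q R UV NM \<partial>(C \<Otimes>\<^sub>M C) \<partial>(H \<Otimes>\<^sub>M H))"
    by (subst CC.P.nn_integral_fst[symmetric]) (simp_all, measurable)
  also have "\<dots> \<le> (\<integral>\<^sup>+UV. real CARD('n) * ennreal (min_form Q R UV) \<partial>(H \<Otimes>\<^sub>M H))"
    using Q R unfolding C_def
    by (intro nn_integral_mono) (simp add: nn_integral_scaled_min_form_le min_form_nonneg flip: ennreal_mult)
  also have "\<dots> = real CARD('n) * (\<integral>\<^sup>+UV. min_form Q R UV \<partial>(H \<Otimes>\<^sub>M H))"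
    by (rule nn_integral_cmult) measurable
  finally show ?thesis .
qed

lemma integral_min_form_bounds:
  fixes Q R :: "real^'n^'n" and H :: "(real^'n^'n) measure"
  assumes H: "prob_space H" and sets_H [measurable_cong]: "sets H = sets borel"
    and orth: "AE U in H. orthogonal_matrix U"
    and Q: "psd_symmetric Q" and R: "psd_symmetric R"
  defines "C \<equiv> \<Pi>\<^sub>M j\<in>UNIV. chi2_measure CARD('n)"
  defines "B \<equiv> (H \<Otimes>\<^sub>M H) \<Otimes>\<^sub>M (C \<Otimes>\<^sub>M C)"
  shows "(1 / real CARD('n)) * (\<integral>z. case_prod (scaled_min_form Q R) z \<partial>B)
      \<le> (\<integral>z. min_form Q R (fst z) \<partial>B)
    \<and> (\<integral>z. min_form Q R (fst z) \<partial>B) \<le> trace (block_diag Q R) / real CARD('n)"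
proof -
  interpret H: prob_space H by fact
  interpret C: prob_space C
    unfolding C_def by (intro prob_space_PiM prob_space_chi2_measure) simp
  interpret CC: pair_prob_space C C ..
  interpret HH: pair_prob_space H H ..
  interpret B: pair_prob_space "H \<Otimes>\<^sub>M H" "C \<Otimes>\<^sub>M C" ..
  have [measurable_cong]: "sets C = sets (\<Pi>\<^sub>M j\<in>UNIV. borel)"
    unfolding C_def by (rule sets_PiM_chi2_measure)
  define X where "X = (\<integral>\<^sup>+z. case_prod (scaled_min_form Q R) z \<partial>B)"
  define Y where "Y = (\<integral>\<^sup>+UV. min_form Q R UV \<partial>(H \<Otimes>\<^sub>M H))"
  have X_le: "X \<le> real CARD('n) * Y"
    unfolding X_def Y_def B_def C_def using sets_H Q R by (rule nn_integral_scaled_min_form_pair_le)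
  have Y_le: "Y \<le> trace (block_diag Q R) / real CARD('n)"
    unfolding Y_def using H sets_H orth by (rule nn_integral_min_form_le_trace)
  have integral_scaled: "(\<integral>z. case_prod (scaled_min_form Q R) z \<partial>B) = enn2real X"
    unfolding X_def B_def using Q R by (intro integral_eq_nn_integral) (auto simp: scaled_min_form_nonneg)
  have "(\<integral>\<^sup>+z. min_form Q R (fst z) \<partial>B) = Y"
    unfolding B_def Y_def by (rule B.nn_integral_fst_pair) measurable
  then have integral_min: "(\<integral>z. min_form Q R (fst z) \<partial>B) = enn2real Y"
    unfolding B_def using Q R by (subst integral_eq_nn_integral) (auto simp: min_form_nonneg)
  have "Y < \<infinity>"
    using Y_le by (simp add: le_less_trans)
  then have "enn2real X \<le> enn2real (real CARD('n) * Y)"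
    using X_le by (intro enn2real_mono) (simp_all add: ennreal_mult_less_top)
  moreover have "0 \<le> trace (block_diag Q R) / real CARD('n)"
    using min_form_nonneg[OF Q R] min_form_le_trace[OF orthogonal_matrix_id orthogonal_matrix_id]
    by (rule order_trans)
  then have "enn2real Y \<le> trace (block_diag Q R) / real CARD('n)"
    using Y_le by (rule enn2real_leI)
  ultimately show ?thesis
    unfolding integral_scaled integral_min by (simp add: enn2real_mult field_simps)
qed

theorem mainTheorem3:
  fixes P :: "'a measure"
    and Q R :: "real^'n^'n"
    and H :: "(real^'n^'n) measure"
    and U V :: "'a \<Rightarrow> real^'n^'n"
    and N M :: "'a \<Rightarrow> 'n \<Rightarrow> real"
  assumes "prob_space P"
    and "psd_symmetric Q" and "psd_symmetric R"
    and "haar_orthogonal H"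
    and "distr P ((borel \<Otimes>\<^sub>M borel) \<Otimes>\<^sub>M
                   ((\<Pi>\<^sub>M j\<in>UNIV. borel) \<Otimes>\<^sub>M (\<Pi>\<^sub>M j\<in>UNIV. borel)))
            (\<lambda>\<omega>. ((U \<omega>, V \<omega>), (N \<omega>, M \<omega>)))
         = (H \<Otimes>\<^sub>M H) \<Otimes>\<^sub>M
           ((\<Pi>\<^sub>M j\<in>UNIV. chi2_measure CARD('n)) \<Otimes>\<^sub>M (\<Pi>\<^sub>M j\<in>UNIV. chi2_measure CARD('n)))"
  shows "(1 / real CARD('n)) *
           prob_space.expectation P (\<lambda>\<omega>. Min ((\<lambda>j.
              let a = stack (sqrt (N \<omega> j) *\<^sub>R column j (U \<omega>)) (sqrt (M \<omega> j) *\<^sub>R column j (V \<omega>))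
              in a \<bullet> (block_diag Q R *v a)) ` UNIV))
         \<le> prob_space.expectation P (\<lambda>\<omega>. Min ((\<lambda>j.
              column j (U \<omega>) \<bullet> (Q *v column j (U \<omega>)) + column j (V \<omega>) \<bullet> (R *v column j (V \<omega>))) ` UNIV))
       \<and> prob_space.expectation P (\<lambda>\<omega>. Min ((\<lambda>j.
              column j (U \<omega>) \<bullet> (Q *v column j (U \<omega>)) + column j (V \<omega>) \<bullet> (R *v column j (V \<omega>))) ` UNIV))
         \<le> trace (block_diag Q R) / real CARD('n)"
proof -
  let ?C = "\<Pi>\<^sub>M j\<in>(UNIV :: 'n set). chi2_measure CARD('n)"
  let ?B = "(borel \<Otimes>\<^sub>M borel) \<Otimes>\<^sub>M ((\<Pi>\<^sub>M j\<in>UNIV. borel) \<Otimes>\<^sub>M (\<Pi>\<^sub>M j\<in>UNIV. borel))"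
  define Z where "Z = (\<lambda>\<omega>. ((U \<omega>, V \<omega>), (N \<omega>, M \<omega>)))"
  have H: "prob_space H" "sets H = sets borel"
    using assms(4) unfolding haar_orthogonal_def by simp_all
  have law: "distr P ?B Z = (H \<Otimes>\<^sub>M H) \<Otimes>\<^sub>M (?C \<Otimes>\<^sub>M ?C)"
    using assms(5) unfolding Z_def .
  have law_prob: "prob_space (distr P ?B Z)"
    unfolding law by (intro prob_space_pair H prob_space_PiM prob_space_chi2_measure) simp_all
  have Z_space: "Z \<in> space P \<rightarrow> space ?B"
    by (simp add: space_pair_measure space_PiM)
  note integral_law = integral_distr_prob_space[OF law_prob Z_space, unfolded law]
  have "(\<integral>\<omega>. scaled_min_form Q R (U \<omega>, V \<omega>) (N \<omega>, M \<omega>) \<partial>P)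
      = (\<integral>z. case_prod (scaled_min_form Q R) z \<partial>((H \<Otimes>\<^sub>M H) \<Otimes>\<^sub>M (?C \<Otimes>\<^sub>M ?C)))"
    using integral_law[of "case_prod (scaled_min_form Q R)"] by (simp add: Z_def)
  moreover have "(\<integral>\<omega>. min_form Q R (U \<omega>, V \<omega>) \<partial>P)
      = (\<integral>z. min_form Q R (fst z) \<partial>((H \<Otimes>\<^sub>M H) \<Otimes>\<^sub>M (?C \<Otimes>\<^sub>M ?C)))"
    using integral_law[of "\<lambda>z. min_form Q R (fst z)"] by (simp add: Z_def)
  ultimately show ?thesis
    unfolding Min_stack_form_eq_scaled_min_form Min_column_forms_eq_min_form
    using integral_min_form_bounds[OF H AE_orthogonal_matrix_if_haar_orthogonal[OF assms(4)] assms(2,3)]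
    by simp
qed

end
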